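(* Let $Z_1,Z_2,\ldots$ be i.i.d. real-valued from a distribution with finite second moment and mean $\theta^*$, use the squared-error loss $\ell(\theta;z)=(z-\theta)^2$ on $\Theta=\mathbb{R}$, fix $\omega>0$ and $\alpha\in(0,1)$, and consider the online GUe-value $$G_{n,\mathrm{on}}(\theta)=\exp\Bigl[-\omega\sum_{i=1}^n\{(Z_i-\widehat\theta_{i-1})^2-(Z_i-\theta)^2\}\Bigr],$$ where $\widehat\theta_k=k^{-1}\sum_{i=1}^kZ_i$ for $k\ge1$ and $\widehat\theta_0$ is a fixed constant. There is a sufficiently large constant $C>0$ such that, for any sequence $(\theta_n)_{n\in\mathbb{N}}$ in $\mathbb{R}$ with $\theta_n-\theta^*\ge C\,(n/\log n)^{-1/2}$ for all large $n$, $$\lim_{n\to\infty}\Pr\{G_{n,\mathrm{on}}(\theta_n)\ge\alpha^{-1}\}=1.$$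
   Context: Under the squared-error loss the empirical risk minimizer on the first $k$ observations is their sample mean, which is the estimator used in the online GUe-value here. *)

theory Defs
  imports "HOL-Probability.Probability"
begin

definition theta_hat :: "(nat \<Rightarrow> 'a \<Rightarrow> real) \<Rightarrow> real \<Rightarrow> nat \<Rightarrow> 'a \<Rightarrow> real" where
  "theta_hat Z c k x = (if k = 0 then c else (\<Sum>i=1..k. Z i x) / real k)"

definition G_on :: "real \<Rightarrow> (nat \<Rightarrow> 'a \<Rightarrow> real) \<Rightarrow> real \<Rightarrow> nat \<Rightarrow> real \<Rightarrow> 'a \<Rightarrow> real" where
  "G_on \<omega> Z c n \<theta> x =
     exp (- \<omega> * (\<Sum>i=1..n. (Z i x - theta_hat Z c (i - 1) x)^2 - (Z i x - \<theta>)^2))"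

end

(*
  Under squared loss the regret of the running mean has a closed form: Welford's update of
  the sum of squared deviations telescopes to

    sum_{i<=n} ((Z_i - theta_hat_{i-1})^2 - (Z_i - theta)^2)
      = sum_{i<=n} (Z_i - theta_hat_{i-1})^2 / i - n (theta_hat_n - theta)^2,

  so G_on(theta) = exp (omega (n (theta_hat_n - theta)^2 - sum_{i<=n} (Z_i - theta_hat_{i-1})^2 / i)).
  Since (Z_i - theta_hat_{i-1})^2 <= 2 (Z_i - theta_star)^2 + 2 (theta_hat_{i-1} - theta_star)^2,
  the subtracted sum is O(log n) with probability tending to 1: the weighted past estimation
  errors sum_i (theta_hat_{i-1} - theta_star)^2 / i have bounded expectation
  (theta_hat_0 - theta_star)^2 + sum_{i>=2} sigma^2 / ((i - 1) i) (Markov), and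
  sum_i (Z_i - theta_star)^2 / i obeys a weak law of large numbers at scale log n, proved by
  truncating the i-th term at level i (Chebyshev for the truncated part, Markov for the
  remainder, which is o(log n) by dominated convergence). By Chebyshev,
  |theta_hat_n - theta_star| < (log n / n)^(1/2) with probability tending to 1, so if
  theta_n - theta_star >= C (log n / n)^(1/2) with C = 2 sigma^2 + 10, the gain
  n (theta_hat_n - theta_n)^2 >= (C - 1)^2 log n beats the regret by log n, and
  G_on(theta_n) >= n^omega >= 1 / alpha eventually.
*)

theory Submission
  imports Defs "HOL-Analysis.Harmonic_Numbers" "HOL-Real_Asymp.Real_Asymp"
begin

section \<open>Regret of the running mean\<close>

lemma theta_hat_Suc:
  "theta_hat Z c (Suc n) x = (real n * theta_hat Z c n x + Z (Suc n) x) / real (Suc n)"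
  by (cases "n = 0") (simp_all add: theta_hat_def field_simps)

lemma sum_sq_dev_theta_hat:
  "(\<Sum>i=1..n. (Z i x - a)^2) - real n * (theta_hat Z c n x - a)^2 =
     (\<Sum>i=1..n. (1 - 1 / real i) * (Z i x - theta_hat Z c (i - 1) x)^2)"
proof (induction n)
  case 0
  show ?case by simp
next
  case (Suc n)
  define m y where "m = theta_hat Z c n x" and "y = Z (Suc n) x"
  have "real n * m + y = real (Suc n) * a + (real n * (m - a) + (y - a))"
    by (simp add: algebra_simps)
  then have "(y - a)^2 - real (Suc n) * ((real n * m + y) / real (Suc n) - a)^2 + real n * (m - a)^2
      = (1 - 1 / real (Suc n)) * (y - m)^2"
    by (simp add: power_divide field_simps) (simp add: power2_eq_square algebra_simps)
  then show ?case
    using Suc.IH by (simp add: theta_hat_Suc m_def y_def algebra_simps)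
qed

lemma G_on_eq_exp_regret:
  "G_on \<omega> Z c n \<theta> x = exp (\<omega> * (real n * (theta_hat Z c n x - \<theta>)^2
      - (\<Sum>i=1..n. (Z i x - theta_hat Z c (i - 1) x)^2 / real i)))"
proof -
  define e where "e i = (Z i x - theta_hat Z c (i - 1) x)^2" for i
  have "(\<Sum>i=1..n. e i - (Z i x - \<theta>)^2) = (\<Sum>i=1..n. e i - (1 - 1 / real i) * e i)
      - real n * (theta_hat Z c n x - \<theta>)^2"
    using sum_sq_dev_theta_hat[of Z x \<theta> n c] by (simp add: sum_subtractf e_def)
  also have "(\<Sum>i=1..n. e i - (1 - 1 / real i) * e i) = (\<Sum>i=1..n. e i / real i)"
    by (simp add: algebra_simps)
  finally have regret: "(\<Sum>i=1..n. e i - (Z i x - \<theta>)^2)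
      = (\<Sum>i=1..n. e i / real i) - real n * (theta_hat Z c n x - \<theta>)^2" .
  show ?thesis
    unfolding G_on_def regret[unfolded e_def] by (simp add: algebra_simps)
qed

lemma theta_hat_minus_eq:
  "1 \<le> k \<Longrightarrow> theta_hat Z c k x - a = (\<Sum>i=1..k. (Z i x - a) / real k)"
  by (simp add: theta_hat_def sum_subtractf sum_divide_distrib[symmetric] field_simps)

lemma sum_sq_prediction_error_le:
  "(\<Sum>i=1..n. (Z i x - theta_hat Z c (i - 1) x)^2 / real i)
    \<le> 2 * (\<Sum>i=1..n. (Z i x - a)^2 / real i) + 2 * (\<Sum>i=1..n. (theta_hat Z c (i - 1) x - a)^2 / real i)"
proof -
  have "(Z i x - theta_hat Z c (i - 1) x)^2 / real i
      \<le> 2 * ((Z i x - a)^2 / real i) + 2 * ((theta_hat Z c (i - 1) x - a)^2 / real i)" for i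
  proof -
    have "(Z i x - theta_hat Z c (i - 1) x)^2 \<le> 2 * (Z i x - a)^2 + 2 * (theta_hat Z c (i - 1) x - a)^2"
      using sum_squares_ge_zero[of "Z i x - a + (theta_hat Z c (i - 1) x - a)" 0]
      by (simp add: power2_eq_square algebra_simps)
    then show ?thesis
      by (simp add: divide_right_mono add_divide_distrib[symmetric])
  qed
  then show ?thesis
    by (simp add: sum_mono sum.distrib[symmetric] sum_distrib_left)
qed

lemma inverse_le_G_on_if_regret_le:
  assumes "0 < \<omega>" "0 < \<alpha>" and "- ln \<alpha> \<le> \<omega> * L"
    and "(\<Sum>i=1..n. (Z i x - theta_hat Z c (i - 1) x)^2 / real i) + L
      \<le> real n * (theta_hat Z c n x - \<theta>)^2"
  shows "1 / \<alpha> \<le> G_on \<omega> Z c n \<theta> x"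
proof -
  have "\<omega> * L \<le> \<omega> * (real n * (theta_hat Z c n x - \<theta>)^2
      - (\<Sum>i=1..n. (Z i x - theta_hat Z c (i - 1) x)^2 / real i))"
    using assms(1,4) by (intro mult_left_mono) simp_all
  then have "ln (1 / \<alpha>) \<le> \<omega> * (real n * (theta_hat Z c n x - \<theta>)^2
      - (\<Sum>i=1..n. (Z i x - theta_hat Z c (i - 1) x)^2 / real i))"
    using assms(2,3) by (simp add: ln_div)
  then have "exp (ln (1 / \<alpha>)) \<le> G_on \<omega> Z c n \<theta> x"
    unfolding G_on_eq_exp_regret by simp
  then show ?thesis
    using assms(2) by simp
qed

lemma inverse_le_G_on_if_estimates:
  assumes "0 < \<omega>" "0 < \<alpha>" "0 \<le> V" "V \<le> L" "- ln \<alpha> \<le> \<omega> * L"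
    and close: "\<bar>theta_hat Z c n x - \<mu>\<bar> < sqrt (L / real n)"
    and far: "(2 * V + 10) * sqrt (L / real n) \<le> \<theta> - \<mu>"
    and drift: "(\<Sum>i=1..n. (theta_hat Z c (i - 1) x - \<mu>)^2 / real i) < L"
    and noise: "(\<Sum>i=1..n. (Z i x - \<mu>)^2 / real i) \<le> (V + 2) * L + V"
  shows "1 / \<alpha> \<le> G_on \<omega> Z c n \<theta> x"
proof (rule inverse_le_G_on_if_regret_le[OF assms(1,2,5)])
  define r where "r = sqrt (L / real n)"
  \<comment> \<open>\<open>close\<close> excludes \<open>n = 0\<close>, where \<open>L / real n = 0\<close>.\<close>
  have "0 < r"
    using close unfolding r_def by linarith
  then have "0 < L" "0 < real n" "real n * r^2 = L"
    unfolding r_def by (auto simp: zero_less_divide_iff split: if_splits)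
  have "(\<Sum>i=1..n. (Z i x - theta_hat Z c (i - 1) x)^2 / real i) + L \<le> (2 * V + 9) * L"
    using sum_sq_prediction_error_le[of Z x c n \<mu>] drift noise assms(4) by (simp add: algebra_simps)
  also have "\<dots> \<le> (2 * V + 9)^2 * L"
    using assms(3) \<open>0 < L\<close> by (intro mult_right_mono) (simp_all add: power2_eq_square)
  also have "\<dots> = real n * ((2 * V + 9) * r)^2"
    using \<open>real n * r^2 = L\<close> by (simp add: power_mult_distrib)
  also have "\<dots> \<le> real n * (theta_hat Z c n x - \<theta>)^2"
  proof -
    have "(2 * V + 9) * r \<le> \<theta> - theta_hat Z c n x"
      using far close unfolding r_def by (simp add: algebra_simps abs_less_iff)
    then show ?thesis
      using assms(3) \<open>0 < r\<close> by (intro mult_left_mono) (simp_all add: power2_commute power_mono)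
  qed
  finally show "(\<Sum>i=1..n. (Z i x - theta_hat Z c (i - 1) x)^2 / real i) + L
      \<le> real n * (theta_hat Z c n x - \<theta>)^2" .
qed

lemma sum_inverse_pred_mult_le_1: "(\<Sum>i=2..n. 1 / (real (i - 1) * real i)) \<le> 1"
proof -
  have "(\<Sum>i=2..n. 1 / (real (i - 1) * real i)) = 1 - 1 / real n" if "n \<ge> 1"
    using that
  proof (induction n rule: dec_induct)
    case (step k)
    have "(\<Sum>i=2..Suc k. 1 / (real (i - 1) * real i))
        = (\<Sum>i=2..k. 1 / (real (i - 1) * real i)) + 1 / (real k * real (Suc k))"
      using step.hyps by simp
    also have "\<dots> = 1 - 1 / real (Suc k)"
    proof -
      have "1 / real k - 1 / (real k * real (Suc k)) = 1 / real (Suc k)"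
        using step.hyps by (simp add: divide_simps)
      then show ?thesis
        unfolding step.IH by simp
    qed
    finally show ?case .
  qed simp
  then show ?thesis by (cases "n = 0") simp_all
qed

lemma harm_le_ln_plus_1: "harm n \<le> ln (real n) + (1 :: real)"
proof (cases "n = 0")
  case False
  then show ?thesis
    using euler_mascheroni_sequence_decreasing[of 1 n] by (simp add: harm_expand)
qed (simp add: harm_def)

lemma LIMSEQ_const_div_ln: "(\<lambda>n. a / ln (real n)) \<longlonglongrightarrow> 0"
  by real_asymp

lemma harmonic_weighted_sum_div_ln_LIMSEQ_0:
  fixes e :: "nat \<Rightarrow> real"
  assumes nonneg: "\<And>i. 0 \<le> e i" and "e \<longlonglongrightarrow> 0"
  shows "(\<lambda>n. (\<Sum>i=1..n. e i / real i) / ln (real n)) \<longlonglongrightarrow> 0"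
proof (rule LIMSEQ_I)
  fix r :: real
  assume "0 < r"
  then have "eventually (\<lambda>i. e i < r / 4) sequentially"
    using order_tendstoD(2)[OF \<open>e \<longlonglongrightarrow> 0\<close>, of "r / 4"] by simp
  then obtain N where N: "\<And>i. i \<ge> N \<Longrightarrow> e i < r / 4"
    by (auto simp: eventually_sequentially)
  define A where "A = (\<Sum>i<N. e i)"
  have split: "e i / real i \<le> (if i < N then e i else 0) + r / 4 * (1 / real i)" if "i \<ge> 1" for i
  proof (cases "i < N")
    case True
    have "e i / real i \<le> e i"
      using nonneg[of i] that by (simp add: divide_le_eq mult_le_cancel_left1 mult_left_le)
    moreover have "0 \<le> r / 4 * (1 / real i)"
      using \<open>0 < r\<close> by simp
    ultimately show ?thesis using True by simp
  next
    case False
    then have "e i \<le> r / 4"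
      using N[of i] by simp
    then have "e i / real i \<le> (r / 4) / real i"
      by (rule divide_right_mono) simp
    then show ?thesis using False by simp
  qed
  have bound: "(\<Sum>i=1..n. e i / real i) \<le> A + r / 4 * (ln (real n) + 1)" for n
  proof -
    have "(\<Sum>i=1..n. e i / real i) \<le> (\<Sum>i=1..n. (if i < N then e i else 0) + r / 4 * (1 / real i))"
      by (rule sum_mono, rule split) simp
    also have "\<dots> = (\<Sum>i=1..n. (if i < N then e i else 0)) + r / 4 * harm n"
      by (simp add: sum.distrib sum_distrib_left harm_def inverse_eq_divide)
    also have "(\<Sum>i=1..n. (if i < N then e i else 0)) = sum e {i \<in> {1..n}. i < N}"
      by (rule sum.inter_filter[symmetric]) simp
    also have "\<dots> \<le> A"
      unfolding A_def by (rule sum_mono2) (auto simp: nonneg)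
    also have "r / 4 * harm n \<le> r / 4 * (ln (real n) + 1)"
      using harm_le_ln_plus_1[of n] \<open>0 < r\<close> by simp
    finally show ?thesis by simp
  qed
  have "(\<lambda>n. (A + r / 4) / ln (real n) + r / 4) \<longlonglongrightarrow> r / 4"
    by real_asymp
  then have "eventually (\<lambda>n. (A + r / 4) / ln (real n) + r / 4 < r) sequentially"
    by (rule order_tendstoD(2)) (use \<open>0 < r\<close> in simp)
  moreover have "eventually (\<lambda>n. ln (real n) > 0) sequentially"
    by real_asymp
  ultimately have "eventually (\<lambda>n. norm ((\<Sum>i=1..n. e i / real i) / ln (real n) - 0) < r) sequentially"
  proof eventually_elim
    case (elim n)
    have "0 \<le> (\<Sum>i=1..n. e i / real i)" by (intro sum_nonneg) (simp add: nonneg)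
    moreover have "(\<Sum>i=1..n. e i / real i) / ln (real n) \<le> (A + r / 4) / ln (real n) + r / 4"
      using bound[of n] elim by (simp add: field_simps)
    ultimately show ?case using elim by simp
  qed
  then show "\<exists>n0. \<forall>n\<ge>n0. norm ((\<Sum>i=1..n. e i / real i) / ln (real n) - 0) < r"
    by (simp add: eventually_sequentially)
qed

lemma powr_minus_half_eq_sqrt_inverse:
  fixes x :: real
  assumes "0 \<le> x"
  shows "x powr (-1/2) = sqrt (inverse x)"
proof -
  have "x powr (-1/2) = inverse (x powr (1/2))"
    using powr_minus[of x "1/2"] by simp
  then show ?thesis
    using assms by (simp add: powr_half_sqrt real_sqrt_inverse)
qed

section \<open>Events with probability tending to one\<close>

text \<open>Measurability is part of the notion, since \<^const>\<open>measure\<close> is 0 on non-measurable sets.\<close>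

definition (in prob_space) whp :: "(nat \<Rightarrow> 'a \<Rightarrow> bool) \<Rightarrow> bool" where
  "whp P \<longleftrightarrow> (\<forall>n. {x \<in> space M. P n x} \<in> events) \<and> (\<lambda>n. prob {x \<in> space M. P n x}) \<longlonglongrightarrow> 1"

context prob_space
begin

lemma prob_Collect_not:
  assumes "{x \<in> space M. P x} \<in> events"
  shows "prob {x \<in> space M. \<not> P x} = 1 - prob {x \<in> space M. P x}"
proof -
  have "{x \<in> space M. \<not> P x} = space M - {x \<in> space M. P x}"
    by auto
  then show ?thesis
    using prob_compl[OF assms] by simp
qed

lemma whpI:
  assumes events: "\<And>n. {x \<in> space M. P n x} \<in> events"
    and "eventually (\<lambda>n. prob {x \<in> space M. \<not> P n x} \<le> b n) sequentially" and "b \<longlonglongrightarrow> 0"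
  shows "whp P"
proof -
  have lower: "eventually (\<lambda>n. 1 - b n \<le> prob {x \<in> space M. P n x}) sequentially"
    using assms(2) by eventually_elim (simp add: prob_Collect_not[OF events])
  have upper: "eventually (\<lambda>n. prob {x \<in> space M. P n x} \<le> 1) sequentially"
    by simp
  have "(\<lambda>n. 1 - b n) \<longlonglongrightarrow> 1"
    using tendsto_diff[OF tendsto_const \<open>b \<longlonglongrightarrow> 0\<close>, of 1] by simp
  from tendsto_sandwich[OF lower upper this tendsto_const] show ?thesis
    unfolding whp_def using events by blast
qed

lemma whp_prob_not_LIMSEQ_0:
  assumes "whp P"
  shows "(\<lambda>n. prob {x \<in> space M. \<not> P n x}) \<longlonglongrightarrow> 0"
proof -
  have "(\<lambda>n. 1 - prob {x \<in> space M. P n x}) \<longlonglongrightarrow> 1 - 1"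
    using assms unfolding whp_def by (intro tendsto_diff tendsto_const) auto
  then show ?thesis
    using assms unfolding whp_def by (simp add: prob_Collect_not)
qed

lemma whp_sets_not: "whp P \<Longrightarrow> {x \<in> space M. \<not> P n x} \<in> events"
  unfolding whp_def by (auto dest: sets.compl_sets simp: set_diff_eq)

lemma whp_conj:
  assumes P: "whp P" and Q: "whp Q"
  shows "whp (\<lambda>n x. P n x \<and> Q n x)"
proof (rule whpI)
  show "{x \<in> space M. P n x \<and> Q n x} \<in> events" for n
    using P Q unfolding whp_def by (auto simp: Collect_conj_eq[symmetric])
  show "eventually (\<lambda>n. prob {x \<in> space M. \<not> (P n x \<and> Q n x)}
      \<le> prob {x \<in> space M. \<not> P n x} + prob {x \<in> space M. \<not> Q n x}) sequentially"
  proof (intro always_eventually allI)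
    fix n
    have "{x \<in> space M. \<not> (P n x \<and> Q n x)} = {x \<in> space M. \<not> P n x} \<union> {x \<in> space M. \<not> Q n x}"
      by auto
    then show "prob {x \<in> space M. \<not> (P n x \<and> Q n x)}
        \<le> prob {x \<in> space M. \<not> P n x} + prob {x \<in> space M. \<not> Q n x}"
      using measure_Un_le[OF whp_sets_not[OF P] whp_sets_not[OF Q]] by simp
  qed
  show "(\<lambda>n. prob {x \<in> space M. \<not> P n x} + prob {x \<in> space M. \<not> Q n x}) \<longlonglongrightarrow> 0"
    using tendsto_add[OF whp_prob_not_LIMSEQ_0[OF P] whp_prob_not_LIMSEQ_0[OF Q]] by simp
qed

lemma whp_mono:
  assumes P: "whp P" and imp: "eventually (\<lambda>n. \<forall>x \<in> space M. P n x \<longrightarrow> Q n x) sequentially"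
    and events: "\<And>n. {x \<in> space M. Q n x} \<in> events"
  shows "whp Q"
proof (rule whpI[OF events _ whp_prob_not_LIMSEQ_0[OF P]])
  show "eventually (\<lambda>n. prob {x \<in> space M. \<not> Q n x} \<le> prob {x \<in> space M. \<not> P n x}) sequentially"
    using imp
    by eventually_elim (use whp_sets_not[OF P] in \<open>auto intro: finite_measure_mono\<close>)
qed

end

lemma (in prob_space)
  fixes Y :: "'i \<Rightarrow> 'a \<Rightarrow> real"
  assumes indep: "indep_vars (\<lambda>_. borel) Y J" and "finite J"
    and square_integrable: "\<And>i. i \<in> J \<Longrightarrow> integrable M (\<lambda>x. (Y i x)^2)"
    and zero_mean: "\<And>i. i \<in> J \<Longrightarrow> expectation (Y i) = 0"
  shows integrable_square_sum_indep: "integrable M (\<lambda>x. (\<Sum>i\<in>J. Y i x)^2)"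
    and expectation_square_sum_indep:
      "expectation (\<lambda>x. (\<Sum>i\<in>J. Y i x)^2) = (\<Sum>i\<in>J. expectation (\<lambda>x. (Y i x)^2))"
proof -
  have integrable: "integrable M (Y i)" if "i \<in> J" for i
    using indep that square_integrable[OF that]
    by (auto simp: indep_vars_def intro: square_integrable_imp_integrable)
  have products: "integrable M (\<lambda>x. Y i x * Y j x) \<and>
      expectation (\<lambda>x. Y i x * Y j x) = (if i = j then expectation (\<lambda>x. (Y i x)^2) else 0)"
    if "i \<in> J" "j \<in> J" for i j
  proof (cases "i = j")
    case True
    then show ?thesis using square_integrable[OF that(1)] by (simp add: power2_eq_square)
  next
    case False
    have pair: "indep_vars (\<lambda>_. borel) Y {i, j}"
      using indep_vars_subset[OF indep] that by auto
    have "integrable M (\<lambda>x. \<Prod>k\<in>{i, j}. Y k x)"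
      by (rule indep_vars_integrable[OF _ pair]) (use integrable that in auto)
    moreover have "expectation (\<lambda>x. \<Prod>k\<in>{i, j}. Y k x) = (\<Prod>k\<in>{i, j}. expectation (Y k))"
      by (rule indep_vars_lebesgue_integral[OF _ pair]) (use integrable that in auto)
    ultimately show ?thesis using False zero_mean that by simp
  qed
  have square_sum: "(\<lambda>x. (\<Sum>i\<in>J. Y i x)^2) = (\<lambda>x. \<Sum>i\<in>J. \<Sum>j\<in>J. Y i x * Y j x)"
    by (simp add: power2_eq_square sum_product)
  show "integrable M (\<lambda>x. (\<Sum>i\<in>J. Y i x)^2)"
    unfolding square_sum using products by (intro Bochner_Integration.integrable_sum) auto
  have "expectation (\<lambda>x. (\<Sum>i\<in>J. Y i x)^2) = (\<Sum>i\<in>J. \<Sum>j\<in>J. expectation (\<lambda>x. Y i x * Y j x))"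
    unfolding square_sum using products by (simp add: Bochner_Integration.integrable_sum)
  also have "\<dots> = (\<Sum>i\<in>J. \<Sum>j\<in>J. if i = j then expectation (\<lambda>x. (Y i x)^2) else 0)"
    using products by (intro sum.cong) auto
  finally show "expectation (\<lambda>x. (\<Sum>i\<in>J. Y i x)^2) = (\<Sum>i\<in>J. expectation (\<lambda>x. (Y i x)^2))"
    using \<open>finite J\<close> by (simp add: sum.delta)
qed

locale iid = prob_space +
  fixes X :: "nat \<Rightarrow> 'a \<Rightarrow> real"
  assumes measurable_X [measurable]: "\<And>i. 1 \<le> i \<Longrightarrow> X i \<in> borel_measurable M"
    and indep_X: "indep_vars (\<lambda>_. borel) X {1..}"
    and distr_X: "\<And>i. 1 \<le> i \<Longrightarrow> distr M borel (X i) = distr M borel (X 1)"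
    and integrable_X1: "integrable M (X 1)"
begin

lemma integrable_comp_X_iff:
  assumes "1 \<le> i" and [measurable]: "g \<in> borel_measurable borel"
  shows "integrable M (\<lambda>x. g (X i x)) \<longleftrightarrow> integrable M (\<lambda>x. g (X 1 x) :: real)"
  using integrable_distr_eq[OF measurable_X[OF assms(1)] assms(2)]
    integrable_distr_eq[OF measurable_X[of 1] assms(2)]
  by (simp add: distr_X[OF assms(1)])

lemma expectation_comp_X:
  assumes "1 \<le> i" and [measurable]: "g \<in> borel_measurable borel"
  shows "expectation (\<lambda>x. g (X i x)) = expectation (\<lambda>x. g (X 1 x) :: real)"
  using integral_distr[OF measurable_X[OF assms(1)] assms(2)]
    integral_distr[OF measurable_X[of 1] assms(2)]
  by (simp add: distr_X[OF assms(1)])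

lemma integrable_X: "1 \<le> i \<Longrightarrow> integrable M (X i)"
  using integrable_comp_X_iff[of i "\<lambda>z. z"] integrable_X1 by simp

lemma expectation_X: "1 \<le> i \<Longrightarrow> expectation (X i) = expectation (X 1)"
  using expectation_comp_X[of i "\<lambda>z. z"] by simp

lemma iid_comp:
  assumes [measurable]: "g \<in> borel_measurable borel" and "integrable M (\<lambda>x. g (X 1 x))"
  shows "iid M (\<lambda>i x. g (X i x))"
proof
  show "indep_vars (\<lambda>_. borel) (\<lambda>i x. g (X i x)) {1..}"
    by (rule indep_vars_compose2[OF indep_X]) simp
  show "distr M borel (\<lambda>x. g (X i x)) = distr M borel (\<lambda>x. g (X 1 x))" if "1 \<le> i" for i
    using distr_distr[OF assms(1) measurable_X[OF that]] distr_distr[OF assms(1) measurable_X[of 1]]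
    by (simp add: distr_X[OF that] comp_def)
qed (use assms in simp_all)

lemma borel_measurable_theta_hat [measurable]: "theta_hat X c k \<in> borel_measurable M"
  unfolding theta_hat_def[abs_def] by measurable

lemma borel_measurable_G_on [measurable]: "G_on \<omega> X c n \<theta> \<in> borel_measurable M"
  unfolding G_on_def[abs_def] by measurable

end

section \<open>A weak law of large numbers for harmonically weighted sums\<close>

definition trunc_at :: "nat \<Rightarrow> real \<Rightarrow> real" where
  "trunc_at i w = (if w \<le> real i then w else 0)"

lemma borel_measurable_trunc_at [measurable]: "trunc_at i \<in> borel_measurable borel"
  unfolding trunc_at_def[abs_def] by measurable

lemma trunc_at_bounds:
  assumes "0 \<le> w"
  shows "0 \<le> trunc_at i w" "trunc_at i w \<le> w" "trunc_at i w \<le> real i"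
    "(trunc_at i w)^2 \<le> real i * trunc_at i w"
  using assms by (auto simp: trunc_at_def power2_eq_square intro: mult_right_mono)

locale nonneg_iid = iid +
  assumes nonneg_X: "\<And>i x. x \<in> space M \<Longrightarrow> 0 \<le> X i x"
begin

definition truncated_mean :: "nat \<Rightarrow> real" where
  "truncated_mean i = expectation (\<lambda>x. trunc_at i (X 1 x))"

lemma integrable_trunc_at_X: "1 \<le> i \<Longrightarrow> integrable M (\<lambda>x. trunc_at j (X i x))"
  by (rule integrable_const_bound[where B = "real j"]) (simp_all add: nonneg_X trunc_at_bounds)

lemma expectation_trunc_at_X: "1 \<le> i \<Longrightarrow> expectation (\<lambda>x. trunc_at j (X i x)) = truncated_mean j"
  unfolding truncated_mean_def by (rule expectation_comp_X) simp_all

lemma truncated_mean_le: "truncated_mean i \<le> expectation (X 1)"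
  unfolding truncated_mean_def
  using integrable_X1
  by (intro integral_mono) (simp_all add: integrable_trunc_at_X nonneg_X trunc_at_bounds)

lemma truncated_mean_LIMSEQ: "truncated_mean \<longlonglongrightarrow> expectation (X 1)"
  unfolding truncated_mean_def[abs_def]
proof (rule integral_dominated_convergence[where w = "X 1"])
  show "AE x in M. (\<lambda>i. trunc_at i (X 1 x)) \<longlonglongrightarrow> X 1 x"
  proof (intro AE_I2 tendsto_eventually)
    fix x
    show "eventually (\<lambda>i. trunc_at i (X 1 x) = X 1 x) sequentially"
      using eventually_ge_at_top[of "nat \<lceil>X 1 x\<rceil>"]
      by eventually_elim (auto simp: trunc_at_def nat_le_iff ceiling_le_iff)
  qed
qed (use integrable_X1 in \<open>simp_all add: nonneg_X trunc_at_bounds\<close>)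

lemma
  assumes "1 \<le> i"
  defines "Y \<equiv> \<lambda>x. (trunc_at i (X i x) - truncated_mean i) / real i"
  shows integrable_square_centered_trunc_at: "integrable M (\<lambda>x. (Y x)^2)"
    and expectation_centered_trunc_at: "expectation Y = 0"
    and expectation_square_centered_trunc_at: "expectation (\<lambda>x. (Y x)^2) \<le> expectation (X 1) / real i"
proof -
  define T where "T x = trunc_at i (X i x)" for x
  define m where "m = truncated_mean i"
  have T: "integrable M T" "expectation T = m"
    using assms(1) unfolding T_def m_def
    by (simp_all add: integrable_trunc_at_X expectation_trunc_at_X)
  have [measurable]: "X i \<in> borel_measurable M"
    using assms(1) by (rule measurable_X)
  have T2: "integrable M (\<lambda>x. (T x)^2)"
    by (rule integrable_const_bound[where B = "(real i)^2"])
      (auto simp: T_def nonneg_X trunc_at_bounds intro!: power_mono)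
  have T_square_le: "(T x)^2 \<le> real i * T x" if "x \<in> space M" for x
    using that by (simp add: T_def nonneg_X trunc_at_bounds)
  have square: "(\<lambda>x. (Y x)^2) = (\<lambda>x. ((T x)^2 - 2 * m * T x + m^2) / (real i)^2)"
    by (simp add: Y_def T_def m_def power_divide power2_diff algebra_simps)
  show "integrable M (\<lambda>x. (Y x)^2)"
    unfolding square using T T2 by simp
  show "expectation Y = 0"
    using T by (simp add: Y_def T_def[symmetric] m_def[symmetric] prob_space)
  have "expectation (\<lambda>x. (Y x)^2) = (expectation (\<lambda>x. (T x)^2) - m^2) / (real i)^2"
    unfolding square using T T2 by (simp add: prob_space power2_eq_square)
  also have "\<dots> \<le> expectation (\<lambda>x. (T x)^2) / (real i)^2"
    by (simp add: divide_right_mono)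
  also have "expectation (\<lambda>x. (T x)^2) \<le> expectation (\<lambda>x. real i * T x)"
    using T T2 T_square_le by (intro integral_mono) auto
  also have "expectation (\<lambda>x. real i * T x) \<le> real i * expectation (X 1)"
    using T truncated_mean_le[of i] by (simp add: m_def mult_left_mono)
  finally show "expectation (\<lambda>x. (Y x)^2) \<le> expectation (X 1) / real i"
    using assms(1) by (simp add: power2_eq_square divide_right_mono field_simps)
qed

lemma whp_centered_truncated_sum_lt_ln:
  "whp (\<lambda>n x. \<bar>\<Sum>i=1..n. (trunc_at i (X i x) - truncated_mean i) / real i\<bar> < ln (real n))"
proof (rule whpI)
  define Y where "Y = (\<lambda>i x. (trunc_at i (X i x) - truncated_mean i) / real i)"
  define \<mu> where "\<mu> = expectation (X 1)"
  show "{x \<in> space M. \<bar>\<Sum>i=1..n. (trunc_at i (X i x) - truncated_mean i) / real i\<bar> < ln (real n)}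
      \<in> events" for n
    by measurable
  have "eventually (\<lambda>n. 0 < ln (real n)) sequentially"
    by real_asymp
  then show "eventually (\<lambda>n. prob {x \<in> space M. \<not> \<bar>\<Sum>i=1..n. (trunc_at i (X i x) - truncated_mean i) / real i\<bar> < ln (real n)}
      \<le> \<mu> * (ln (real n) + 1) / (ln (real n))^2) sequentially"
  proof eventually_elim
    case (elim n)
    have indep: "indep_vars (\<lambda>_. borel) Y {1..n}"
      unfolding Y_def by (rule indep_vars_compose2[OF indep_vars_subset[OF indep_X]]) auto
    have square_integrable: "integrable M (\<lambda>x. (Y i x)^2)" if "i \<in> {1..n}" for i
      unfolding Y_def using that by (intro integrable_square_centered_trunc_at) simp
    have zero_mean: "expectation (Y i) = 0" if "i \<in> {1..n}" for i
      unfolding Y_def using that by (intro expectation_centered_trunc_at) simp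
    have variance: "expectation (\<lambda>x. (Y i x)^2) \<le> \<mu> * (1 / real i)" if "i \<in> {1..n}" for i
      unfolding Y_def \<mu>_def using that expectation_square_centered_trunc_at[of i] by simp
    have "prob {x \<in> space M. \<not> \<bar>\<Sum>i=1..n. Y i x\<bar> < ln (real n)}
        \<le> expectation (\<lambda>x. (\<Sum>i=1..n. Y i x)^2) / (ln (real n))^2"
    proof (unfold not_less, rule second_moment_method)
      show "(\<lambda>x. \<Sum>i=1..n. Y i x) \<in> borel_measurable M"
        unfolding Y_def by measurable
      show "integrable M (\<lambda>x. (\<Sum>i=1..n. Y i x)^2)"
        using indep square_integrable zero_mean by (intro integrable_square_sum_indep) auto
    qed (use elim in simp)
    also have "expectation (\<lambda>x. (\<Sum>i=1..n. Y i x)^2) = (\<Sum>i=1..n. expectation (\<lambda>x. (Y i x)^2))"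
      using indep square_integrable zero_mean by (intro expectation_square_sum_indep) auto
    also have "\<dots> \<le> (\<Sum>i=1..n. \<mu> * (1 / real i))"
      by (intro sum_mono variance)
    also have "\<dots> = \<mu> * harm n"
      by (simp add: harm_def sum_distrib_left inverse_eq_divide)
    also have "\<dots> \<le> \<mu> * (ln (real n) + 1)"
      using harm_le_ln_plus_1[of n] by (intro mult_left_mono) (simp_all add: \<mu>_def integral_nonneg_AE nonneg_X)
    finally show ?case
      using elim by (simp add: Y_def divide_right_mono)
  qed
  show "(\<lambda>n. \<mu> * (ln (real n) + 1) / (ln (real n))^2) \<longlonglongrightarrow> 0"
    by real_asymp
qed

lemma whp_truncation_remainder_lt_ln:
  "whp (\<lambda>n x. (\<Sum>i=1..n. (X i x - trunc_at i (X i x)) / real i) < ln (real n))"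
proof (rule whpI)
  define D where "D = (\<lambda>n x. \<Sum>i=1..n. (X i x - trunc_at i (X i x)) / real i)"
  define \<mu> where "\<mu> = expectation (X 1)"
  show "{x \<in> space M. D n x < ln (real n)} \<in> events" for n
    unfolding D_def by measurable
  have "eventually (\<lambda>n. 0 < ln (real n)) sequentially"
    by real_asymp
  then show "eventually (\<lambda>n. prob {x \<in> space M. \<not> D n x < ln (real n)}
      \<le> (\<Sum>i=1..n. (\<mu> - truncated_mean i) / real i) / ln (real n)) sequentially"
  proof eventually_elim
    case (elim n)
    have terms: "integrable M (\<lambda>x. (X i x - trunc_at i (X i x)) / real i)
        \<and> expectation (\<lambda>x. (X i x - trunc_at i (X i x)) / real i) = (\<mu> - truncated_mean i) / real i"
      if "i \<in> {1..n}" for i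
      using that integrable_X[of i] integrable_trunc_at_X[of i i] expectation_X[of i]
        expectation_trunc_at_X[of i i]
      by (simp add: \<mu>_def)
    have integrable: "integrable M (D n)"
      unfolding D_def using terms by (intro Bochner_Integration.integrable_sum) auto
    have "AE x in M. 0 \<le> D n x"
      unfolding D_def
      by (intro AE_I2 sum_nonneg divide_nonneg_nonneg) (simp_all add: nonneg_X trunc_at_bounds)
    from integral_Markov_inequality_measure[OF integrable sets.top this elim]
    have "prob {x \<in> space M. \<not> D n x < ln (real n)} \<le> expectation (D n) / ln (real n)"
      by (simp add: not_less)
    also have "expectation (D n) = (\<Sum>i=1..n. (\<mu> - truncated_mean i) / real i)"
      unfolding D_def using terms by (simp add: Bochner_Integration.integral_sum)
    finally show ?case .
  qed
  show "(\<lambda>n. (\<Sum>i=1..n. (\<mu> - truncated_mean i) / real i) / ln (real n)) \<longlonglongrightarrow> 0"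
  proof (rule harmonic_weighted_sum_div_ln_LIMSEQ_0)
    show "0 \<le> \<mu> - truncated_mean i" for i
      using truncated_mean_le[of i] by (simp add: \<mu>_def)
    show "(\<lambda>i. \<mu> - truncated_mean i) \<longlonglongrightarrow> 0"
      using tendsto_diff[OF tendsto_const truncated_mean_LIMSEQ, of \<mu>] by (simp add: \<mu>_def)
  qed
qed

theorem whp_harmonic_weighted_sum_le:
  "whp (\<lambda>n x. (\<Sum>i=1..n. X i x / real i) \<le> (expectation (X 1) + 2) * ln (real n) + expectation (X 1))"
proof (rule whp_mono[OF whp_conj[OF whp_centered_truncated_sum_lt_ln whp_truncation_remainder_lt_ln]])
  define \<mu> where "\<mu> = expectation (X 1)"
  have "\<mu> \<ge> 0"
    unfolding \<mu>_def by (simp add: integral_nonneg_AE nonneg_X)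
  show "{x \<in> space M. (\<Sum>i=1..n. X i x / real i) \<le> (\<mu> + 2) * ln (real n) + \<mu>} \<in> events" for n
    by measurable
  show "eventually (\<lambda>n. \<forall>x \<in> space M.
      \<bar>\<Sum>i=1..n. (trunc_at i (X i x) - truncated_mean i) / real i\<bar> < ln (real n) \<and>
      (\<Sum>i=1..n. (X i x - trunc_at i (X i x)) / real i) < ln (real n) \<longrightarrow>
      (\<Sum>i=1..n. X i x / real i) \<le> (\<mu> + 2) * ln (real n) + \<mu>) sequentially"
  proof (intro always_eventually allI ballI impI)
    fix n x
    assume "\<bar>\<Sum>i=1..n. (trunc_at i (X i x) - truncated_mean i) / real i\<bar> < ln (real n) \<and>
      (\<Sum>i=1..n. (X i x - trunc_at i (X i x)) / real i) < ln (real n)"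
    then have deviation: "(\<Sum>i=1..n. (trunc_at i (X i x) - truncated_mean i) / real i) < ln (real n)"
      and tail: "(\<Sum>i=1..n. (X i x - trunc_at i (X i x)) / real i) < ln (real n)"
      by auto
    have "(\<Sum>i=1..n. truncated_mean i / real i) \<le> (\<Sum>i=1..n. \<mu> * (1 / real i))"
      using truncated_mean_le by (intro sum_mono) (simp add: \<mu>_def divide_right_mono)
    also have "\<dots> = \<mu> * harm n"
      by (simp add: harm_def sum_distrib_left inverse_eq_divide)
    also have "\<dots> \<le> \<mu> * (ln (real n) + 1)"
      using harm_le_ln_plus_1[of n] \<open>\<mu> \<ge> 0\<close> by (intro mult_left_mono) simp_all
    finally have mean: "(\<Sum>i=1..n. truncated_mean i / real i) \<le> \<mu> * (ln (real n) + 1)" .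
    have "(\<Sum>i=1..n. X i x / real i) = (\<Sum>i=1..n. (trunc_at i (X i x) - truncated_mean i) / real i)
        + (\<Sum>i=1..n. truncated_mean i / real i) + (\<Sum>i=1..n. (X i x - trunc_at i (X i x)) / real i)"
      by (simp add: sum.distrib[symmetric] diff_divide_distrib[symmetric] add_divide_distrib[symmetric])
    then show "(\<Sum>i=1..n. X i x / real i) \<le> (\<mu> + 2) * ln (real n) + \<mu>"
      using deviation mean tail by (simp add: algebra_simps)
  qed
qed

end

section \<open>Square-integrable sequences and the online GUe-value\<close>

locale square_integrable_iid = iid +
  assumes square_integrable_X1: "integrable M (\<lambda>x. (X 1 x)^2)"
begin

lemma integrable_square_X_minus: "1 \<le> i \<Longrightarrow> integrable M (\<lambda>x. (X i x - a)^2)"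
proof -
  have "integrable M (\<lambda>x. (X 1 x - a)^2)"
    using square_integrable_X1 integrable_X1 by (simp add: power2_diff)
  then show "1 \<le> i \<Longrightarrow> integrable M (\<lambda>x. (X i x - a)^2)"
    by (subst integrable_comp_X_iff[where g = "\<lambda>z. (z - a)^2"]) simp_all
qed

lemma
  assumes "1 \<le> k"
  shows integrable_square_theta_hat_deviation:
      "integrable M (\<lambda>x. (theta_hat X c k x - expectation (X 1))^2)"
    and expectation_square_theta_hat_deviation:
      "expectation (\<lambda>x. (theta_hat X c k x - expectation (X 1))^2) = variance (X 1) / real k"
proof -
  define \<mu> where "\<mu> = expectation (X 1)"
  define Y where "Y = (\<lambda>i x. (X i x - \<mu>) / real k)"
  have deviation: "theta_hat X c k x - \<mu> = (\<Sum>i=1..k. Y i x)" for x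
    unfolding Y_def using assms by (rule theta_hat_minus_eq)
  have indep: "indep_vars (\<lambda>_. borel) Y {1..k}"
    unfolding Y_def by (rule indep_vars_compose2[OF indep_vars_subset[OF indep_X]]) auto
  have square: "integrable M (\<lambda>x. (Y i x)^2)" 
    and variance: "expectation (\<lambda>x. (Y i x)^2) = variance (X 1) / (real k)^2" if "i \<in> {1..k}" for i
  proof -
    have "integrable M (\<lambda>x. (X i x - \<mu>)^2)"
      using that by (intro integrable_square_X_minus) simp
    then show "integrable M (\<lambda>x. (Y i x)^2)"
      by (simp add: Y_def power_divide)
    have "expectation (\<lambda>x. (X i x - \<mu>)^2) = variance (X 1)"
      using that expectation_comp_X[of i "\<lambda>z. (z - \<mu>)^2"] by (simp add: \<mu>_def)
    then show "expectation (\<lambda>x. (Y i x)^2) = variance (X 1) / (real k)^2"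
      by (simp add: Y_def power_divide)
  qed
  have zero_mean: "expectation (Y i) = 0" if "i \<in> {1..k}" for i
    using that integrable_X[of i] expectation_X[of i] by (simp add: Y_def \<mu>_def prob_space)
  show "integrable M (\<lambda>x. (theta_hat X c k x - expectation (X 1))^2)"
    unfolding \<mu>_def[symmetric] deviation
    using indep square zero_mean by (intro integrable_square_sum_indep) auto
  have "expectation (\<lambda>x. (theta_hat X c k x - \<mu>)^2) = (\<Sum>i=1..k. variance (X 1) / (real k)^2)"
    unfolding deviation
    using indep square zero_mean variance by (subst expectation_square_sum_indep) auto
  also have "\<dots> = variance (X 1) / real k"
    using assms by (simp add: power2_eq_square)
  finally show "expectation (\<lambda>x. (theta_hat X c k x - expectation (X 1))^2) = variance (X 1) / real k"
    by (simp add: \<mu>_def)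
qed

lemma whp_theta_hat_deviation_lt:
  "whp (\<lambda>n x. \<bar>theta_hat X c n x - expectation (X 1)\<bar> < sqrt (ln (real n) / real n))"
proof (rule whpI)
  show "{x \<in> space M. \<bar>theta_hat X c n x - expectation (X 1)\<bar> < sqrt (ln (real n) / real n)} \<in> events" for n
    by measurable
  have "eventually (\<lambda>n. 0 < ln (real n)) sequentially"
    by real_asymp
  then show "eventually (\<lambda>n. prob {x \<in> space M.
      \<not> \<bar>theta_hat X c n x - expectation (X 1)\<bar> < sqrt (ln (real n) / real n)}
      \<le> variance (X 1) / ln (real n)) sequentially"
  proof eventually_elim
    case (elim n)
    then have "1 \<le> n" "0 < real n"
      by (cases "n = 0"; simp)+
    have "prob {x \<in> space M. \<not> \<bar>theta_hat X c n x - expectation (X 1)\<bar> < sqrt (ln (real n) / real n)}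
        \<le> expectation (\<lambda>x. (theta_hat X c n x - expectation (X 1))^2) / (sqrt (ln (real n) / real n))^2"
      unfolding not_less
      by (rule second_moment_method)
        (use elim \<open>0 < real n\<close> integrable_square_theta_hat_deviation[OF \<open>1 \<le> n\<close>] in simp_all)
    also have "\<dots> = variance (X 1) / ln (real n)"
      using elim \<open>0 < real n\<close> expectation_square_theta_hat_deviation[OF \<open>1 \<le> n\<close>] by simp
    finally show ?case .
  qed
  show "(\<lambda>n. variance (X 1) / ln (real n)) \<longlonglongrightarrow> 0"
    by (rule LIMSEQ_const_div_ln)
qed

lemma
  assumes "1 \<le> i"
  shows integrable_weighted_sq_theta_hat_deviation:
      "integrable M (\<lambda>x. (theta_hat X c (i - 1) x - expectation (X 1))^2 / real i)"
    and expectation_weighted_sq_theta_hat_deviation: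
      "expectation (\<lambda>x. (theta_hat X c (i - 1) x - expectation (X 1))^2 / real i)
        = (if i = 1 then (c - expectation (X 1))^2 else variance (X 1) * (1 / (real (i - 1) * real i)))"
proof -
  have "integrable M (\<lambda>x. (theta_hat X c (i - 1) x - expectation (X 1))^2 / real i) \<and>
    expectation (\<lambda>x. (theta_hat X c (i - 1) x - expectation (X 1))^2 / real i)
      = (if i = 1 then (c - expectation (X 1))^2 else variance (X 1) * (1 / (real (i - 1) * real i)))"
  proof (cases "i = 1")
    case True
    then show ?thesis by (simp add: theta_hat_def prob_space)
  next
    case False
    then have "1 \<le> i - 1"
      using assms by simp
    then show ?thesis
      using False integrable_square_theta_hat_deviation expectation_square_theta_hat_deviation
      by simp
  qed
  then show "integrable M (\<lambda>x. (theta_hat X c (i - 1) x - expectation (X 1))^2 / real i)"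
    "expectation (\<lambda>x. (theta_hat X c (i - 1) x - expectation (X 1))^2 / real i)
      = (if i = 1 then (c - expectation (X 1))^2 else variance (X 1) * (1 / (real (i - 1) * real i)))"
    by auto
qed

lemma whp_sum_weighted_sq_theta_hat_deviation_lt_ln:
  "whp (\<lambda>n x. (\<Sum>i=1..n. (theta_hat X c (i - 1) x - expectation (X 1))^2 / real i) < ln (real n))"
proof (rule whpI)
  define \<mu> where "\<mu> = expectation (X 1)"
  define R where "R = (\<lambda>n x. \<Sum>i=1..n. (theta_hat X c (i - 1) x - \<mu>)^2 / real i)"
  show "{x \<in> space M. R n x < ln (real n)} \<in> events" for n
    unfolding R_def by measurable
  have "eventually (\<lambda>n. 0 < ln (real n)) sequentially"
    by real_asymp
  then show "eventually (\<lambda>n. prob {x \<in> space M. \<not> R n x < ln (real n)}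
      \<le> ((c - \<mu>)^2 + variance (X 1)) / ln (real n)) sequentially"
  proof eventually_elim
    case (elim n)
    have integrable: "integrable M (R n)"
      unfolding R_def \<mu>_def by (intro Bochner_Integration.integrable_sum integrable_weighted_sq_theta_hat_deviation) simp
    have "AE x in M. 0 \<le> R n x"
      unfolding R_def by (intro AE_I2 sum_nonneg) simp
    from integral_Markov_inequality_measure[OF integrable sets.top this elim]
    have "prob {x \<in> space M. \<not> R n x < ln (real n)} \<le> expectation (R n) / ln (real n)"
      by (simp add: not_less)
    also have "expectation (R n) \<le> (c - \<mu>)^2 + variance (X 1)"
    proof -
      have "1 \<le> n"
        using elim by (cases "n = 0") simp_all
      have "expectation (R n) = (\<Sum>i=1..n. expectation (\<lambda>x. (theta_hat X c (i - 1) x - \<mu>)^2 / real i))"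
        unfolding R_def \<mu>_def by (intro Bochner_Integration.integral_sum integrable_weighted_sq_theta_hat_deviation) simp
      also have "\<dots> = (\<Sum>i=1..n. if i = 1 then (c - \<mu>)^2 else variance (X 1) * (1 / (real (i - 1) * real i)))"
        unfolding \<mu>_def by (intro sum.cong refl expectation_weighted_sq_theta_hat_deviation) simp
      also have "\<dots> = (c - \<mu>)^2 + variance (X 1) * (\<Sum>i=2..n. 1 / (real (i - 1) * real i))"
        using \<open>1 \<le> n\<close> by (simp add: sum.atLeast_Suc_atMost sum_distrib_left numeral_2_eq_2)
      also have "\<dots> \<le> (c - \<mu>)^2 + variance (X 1)"
        using sum_inverse_pred_mult_le_1[of n] variance_positive[of "X 1"]
        by (simp add: mult_left_le)
      finally show ?thesis .
    qed
    then have "expectation (R n) / ln (real n) \<le> ((c - \<mu>)^2 + variance (X 1)) / ln (real n)"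
      by (rule divide_right_mono) (use elim in simp)
    finally show ?case .
  qed
  show "(\<lambda>n. ((c - \<mu>)^2 + variance (X 1)) / ln (real n)) \<longlonglongrightarrow> 0"
    by (rule LIMSEQ_const_div_ln)
qed

theorem whp_inverse_le_G_on:
  assumes "0 < \<omega>" "0 < \<alpha>"
    and far: "eventually (\<lambda>n. (2 * variance (X 1) + 10) * sqrt (ln (real n) / real n)
      \<le> \<theta>s n - expectation (X 1)) sequentially"
  shows "whp (\<lambda>n x. 1 / \<alpha> \<le> G_on \<omega> X c n (\<theta>s n) x)"
proof -
  define \<mu> V where "\<mu> = expectation (X 1)" and "V = variance (X 1)"
  interpret noise: nonneg_iid M "\<lambda>i x. (X i x - \<mu>)^2"
  proof -
    interpret iid M "\<lambda>i x. (X i x - \<mu>)^2"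
      by (rule iid_comp) (simp_all add: integrable_square_X_minus)
    show "nonneg_iid M (\<lambda>i x. (X i x - \<mu>)^2)"
      by unfold_locales simp
  qed
  have "V \<ge> 0"
    unfolding V_def by (rule variance_positive)
  have "filterlim (\<lambda>n. ln (real n)) at_top sequentially"
    by real_asymp
  then have "eventually (\<lambda>n. max V (- ln \<alpha> / \<omega>) \<le> ln (real n)) sequentially"
    unfolding filterlim_at_top by blast
  then have large: "eventually (\<lambda>n. V \<le> ln (real n) \<and> - ln \<alpha> \<le> \<omega> * ln (real n)) sequentially"
    by eventually_elim (use \<open>0 < \<omega>\<close> in \<open>simp add: field_simps\<close>)
  show ?thesis
  proof (rule whp_mono[OF whp_conj[OF whp_theta_hat_deviation_lt
        whp_conj[OF whp_sum_weighted_sq_theta_hat_deviation_lt_ln noise.whp_harmonic_weighted_sum_le]]])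
    show "{x \<in> space M. 1 / \<alpha> \<le> G_on \<omega> X c n (\<theta>s n) x} \<in> events" for n
      by measurable
    show "eventually (\<lambda>n. \<forall>x \<in> space M.
        \<bar>theta_hat X c n x - expectation (X 1)\<bar> < sqrt (ln (real n) / real n) \<and>
        (\<Sum>i=1..n. (theta_hat X c (i - 1) x - expectation (X 1))^2 / real i) < ln (real n) \<and>
        (\<Sum>i=1..n. (X i x - \<mu>)^2 / real i)
          \<le> (expectation (\<lambda>x. (X 1 x - \<mu>)^2) + 2) * ln (real n) + expectation (\<lambda>x. (X 1 x - \<mu>)^2)
        \<longrightarrow> 1 / \<alpha> \<le> G_on \<omega> X c n (\<theta>s n) x) sequentially"
      using far large
    proof eventually_elim
      case (elim n)
      then show ?case
        using \<open>0 \<le> V\<close> \<open>0 < \<omega>\<close> \<open>0 < \<alpha>\<close>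
        by (auto intro!: inverse_le_G_on_if_estimates[where V = V and L = "ln (real n)" and \<mu> = \<mu>]
            simp: \<mu>_def V_def)
    qed
  qed
qed

end

theorem proposition3:
  fixes M :: "'a measure" and Z :: "nat \<Rightarrow> 'a \<Rightarrow> real"
    and \<theta>star \<omega> \<alpha> c :: real
  assumes "prob_space M"
    and meas: "\<And>i. i \<ge> 1 \<Longrightarrow> Z i \<in> borel_measurable M"
    and indep: "prob_space.indep_vars M (\<lambda>_. borel) Z {1..}"
    and ident: "\<And>i. i \<ge> 1 \<Longrightarrow> distr M borel (Z i) = distr M borel (Z 1)"
    and second_moment: "integrable M (\<lambda>x. (Z 1 x)^2)"
    and mean: "prob_space.expectation M (Z 1) = \<theta>star"
    and "\<omega> > 0" and "0 < \<alpha>" and "\<alpha> < 1"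
  shows "\<exists>C>0. \<forall>\<theta>s :: nat \<Rightarrow> real.
           (\<forall>\<^sub>F n in sequentially. \<theta>s n - \<theta>star \<ge> C * (real n / ln (real n)) powr (-1/2))
           \<longrightarrow> (\<lambda>n. measure M {x \<in> space M. G_on \<omega> Z c n (\<theta>s n) x \<ge> 1 / \<alpha>}) \<longlonglongrightarrow> 1"
proof -
  interpret prob_space M
    by fact
  have "Z 1 \<in> borel_measurable M"
    by (rule meas) simp
  then have "integrable M (Z 1)"
    using second_moment by (rule square_integrable_imp_integrable)
  interpret square_integrable_iid M Z
    by unfold_locales (fact meas indep ident second_moment \<open>integrable M (Z 1)\<close>)+
  show ?thesis
  proof (intro exI conjI allI impI)
    show "0 < 2 * variance (Z 1) + 10"
      using variance_positive[of "Z 1"] by linarith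
    fix \<theta>s :: "nat \<Rightarrow> real"
    assume "\<forall>\<^sub>F n in sequentially. \<theta>s n - \<theta>star \<ge> (2 * variance (Z 1) + 10) * (real n / ln (real n)) powr (-1/2)"
    then have "\<forall>\<^sub>F n in sequentially. (2 * variance (Z 1) + 10) * sqrt (ln (real n) / real n) \<le> \<theta>s n - expectation (Z 1)"
      using eventually_ge_at_top[of 1]
    proof eventually_elim
      case (elim n)
      have "(real n / ln (real n)) powr (-1/2) = sqrt (inverse (real n / ln (real n)))"
        by (rule powr_minus_half_eq_sqrt_inverse) (use elim(2) in simp)
      then show ?case
        using elim(1) unfolding mean by (simp add: inverse_divide)
    qed
    from whp_inverse_le_G_on[OF \<open>\<omega> > 0\<close> \<open>0 < \<alpha>\<close> this]
    show "(\<lambda>n. measure M {x \<in> space M. G_on \<omega> Z c n (\<theta>s n) x \<ge> 1 / \<alpha>}) \<longlonglongrightarrow> 1"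
      unfolding whp_def by blast
  qed
qed

end
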